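(* Two permutations $\sigma\in\mathcal{S}_k$ and $\tau\in\mathcal{S}_{k'}$ satisfy $\mathrm{inv}_n(\sigma)=\mathrm{inv}_n(\tau)$ for every $n$ if and only if $k=k'$ and $\mathcal{J}(\sigma)=\mathcal{J}(\tau)$.
   Context: $\mathrm{inv}_n(\tau)$ is the number of involutions in $\mathcal{S}_n$ containing $\tau$ as a subsequence, where $\pi=\pi_1\ldots\pi_n$ contains $\tau=\tau_1\ldots\tau_k$ as a subsequence if there are indices $i_1<\cdots<i_k$ with $\pi_{i_r}=\tau_r$ for all $r$. The pattern of a word of $j$ distinct letters is its order-preserving relabeling by $\{1,\ldots,j\}$; the length-$j$ initial pattern of $\tau$ is the pattern of $\tau_1\ldots\tau_j$. The $j$-set $\mathcal{J}(\tau)$ of $\tau\in\mathcal{S}_k$ is the set consisting of $0$ together with all $j\in\{1,\ldots,k\}$ such that the length-$j$ initial pattern of $\tau$ is an involution in $\mathcal{S}_j$. *)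

theory Defs
  imports Main "HOL-Library.Sublist"
begin

text \<open>A permutation in S_k is represented in one-line notation as a list of length k
  whose entries are exactly 1..k, each once.\<close>
definition is_perm :: "nat \<Rightarrow> nat list \<Rightarrow> bool" where
  "is_perm k p \<longleftrightarrow> length p = k \<and> distinct p \<and> set p = {1..k}"

text \<open>An involution: pi(pi(i)) = i for all positions i (1-based values, 0-based indices).\<close>
definition is_involution :: "nat list \<Rightarrow> bool" where
  "is_involution p \<longleftrightarrow> (\<forall>i < length p. p ! (p ! i - 1) = i + 1)"

definition inv_count :: "nat \<Rightarrow> nat list \<Rightarrow> nat" where
  "inv_count n t = card {p. is_perm n p \<and> is_involution p \<and> subseq t p}"

text \<open>Order-preserving relabeling of a word of distinct letters by 1..j.\<close>
definition pattern :: "nat list \<Rightarrow> nat list" where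
  "pattern w = map (\<lambda>x. card {y \<in> set w. y \<le> x}) w"

definition jset :: "nat list \<Rightarrow> nat set" where
  "jset t = {0} \<union> {j \<in> {1..length t}. is_perm j (pattern (take j t)) \<and> is_involution (pattern (take j t))}"

end

theory Submission
  imports Defs
begin

text \<open>
  Identify an involution \<open>\<pi>\<close> of \<open>{1..n}\<close> with the function it induces. Since \<open>\<pi>\<close> is its own
  inverse, the value \<open>x\<close> sits at position \<open>\<pi> x\<close>, so \<open>\<pi>\<close> contains \<open>\<tau> \<in> S\<^sub>k\<close> iff \<open>\<pi>\<close> is increasing
  along \<open>\<tau>\<close>. Sorting these involutions of \<open>{1..m + 1}\<close>, \<open>m \<ge> k\<close>, by the partner \<open>a\<close> of \<open>m + 1\<close>:
  a fixed point leaves an involution of \<open>{1..m}\<close>; a partner \<open>a > k\<close> (\<open>m - k\<close> choices) leaves one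
  of \<open>{1..m - 1}\<close> still containing \<open>\<tau>\<close>; a partner \<open>a \<le> k\<close> must be the last letter of \<open>\<tau>\<close>, and
  then the rest contains \<open>\<tau>'\<close>, the standardisation of \<open>\<tau>\<close> without its last letter. Hence
  \<open>inv\<^sub>m\<^sub>+\<^sub>1(\<tau>) = inv\<^sub>m(\<tau>) + (m - k) inv\<^sub>m\<^sub>-\<^sub>1(\<tau>) + inv\<^sub>m\<^sub>-\<^sub>1(\<tau>')\<close> with
  \<open>\<J>(\<tau>') = \<J>(\<tau>) - {k}\<close>, and \<open>inv\<^sub>k(\<tau>) = [k \<in> \<J>(\<tau>)]\<close>. The solution of this recursion is
  \<open>inv\<^sub>n(\<tau>) = \<Sum>j\<in>\<J>(\<tau>). (n - k choose k - j) I\<^sub>n\<^sub>-\<^sub>2\<^sub>k\<^sub>+\<^sub>j\<close>, with \<open>I\<^sub>m\<close> the number of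
  involutions of \<open>{1..m}\<close>. Conversely these sums determine \<open>k\<close> and \<open>\<J>(\<tau>)\<close>: the transform
  \<open>p \<mapsto> (m \<mapsto> \<Sum>d. p d (m choose d) I\<^sub>m\<^sub>-\<^sub>d)\<close> is unitriangular, and shifting \<open>k\<close> by \<open>t > 0\<close>
  would multiply the top coefficient by \<open>(k + t)!/k! > 1\<close>.
\<close>

lemma sorted_wrt_subseq: "subseq xs ys \<Longrightarrow> sorted_wrt P ys \<Longrightarrow> sorted_wrt P xs"
  by (induction rule: list_emb.induct) (auto dest: list_emb_set)

lemma bij_betw_Collect:
  assumes "bij_betw h A B" "\<And>x. x \<in> A \<Longrightarrow> P x \<longleftrightarrow> Q (h x)"
  shows "bij_betw h {x \<in> A. P x} {y \<in> B. Q y}"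
proof (rule bij_betw_subset[OF assms(1)])
  show "h ` {x \<in> A. P x} = {y \<in> B. Q y}"
    using assms bij_betw_imp_surj_on[OF assms(1)] by (auto simp: bij_betw_def)
qed auto

section \<open>Involutions as functions\<close>

definition invol_fun :: "nat \<Rightarrow> (nat \<Rightarrow> nat) \<Rightarrow> bool" where
  "invol_fun n f \<longleftrightarrow> (\<forall>x. f (f x) = x) \<and> (\<forall>x. x \<notin> {1..n} \<longrightarrow> f x = x)"

lemma invol_funI: "(\<And>x. f (f x) = x) \<Longrightarrow> (\<And>x. x \<notin> {1..n} \<Longrightarrow> f x = x) \<Longrightarrow> invol_fun n f"
  by (simp add: invol_fun_def)

lemma invol_fun_invol [simp]: "invol_fun n f \<Longrightarrow> f (f x) = x"
  by (simp add: invol_fun_def)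

lemma invol_fun_outside: "invol_fun n f \<Longrightarrow> x \<notin> {1..n} \<Longrightarrow> f x = x"
  by (simp add: invol_fun_def)

lemma invol_fun_range: "invol_fun n f \<Longrightarrow> x \<in> {1..n} \<Longrightarrow> f x \<in> {1..n}"
proof (rule ccontr)
  assume "invol_fun n f" "x \<in> {1..n}" "f x \<notin> {1..n}"
  then have "x = f x"
    by (metis invol_fun_invol invol_fun_outside)
  then show False
    using \<open>x \<in> {1..n}\<close> \<open>f x \<notin> {1..n}\<close> by simp
qed

lemma invol_fun_image:
  assumes "invol_fun n f"
  shows "f ` {1..n} = {1..n}"
proof (intro equalityI subsetI)
  fix y assume "y \<in> {1..n}"
  then have "f (f y) \<in> f ` {1..n}"
    using invol_fun_range[OF assms] by blast
  then show "y \<in> f ` {1..n}"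
    using assms by simp
qed (use invol_fun_range[OF assms] in blast)

definition list_of_fun :: "nat \<Rightarrow> (nat \<Rightarrow> nat) \<Rightarrow> nat list" where
  "list_of_fun n f = map (\<lambda>i. f (Suc i)) [0..<n]"

definition fun_of_list :: "nat \<Rightarrow> nat list \<Rightarrow> nat \<Rightarrow> nat" where
  "fun_of_list n p x = (if x \<in> {1..n} then p ! (x - 1) else x)"

lemma length_list_of_fun [simp]: "length (list_of_fun n f) = n"
  by (simp add: list_of_fun_def)

lemma nth_list_of_fun [simp]: "i < n \<Longrightarrow> list_of_fun n f ! i = f (Suc i)"
  by (simp add: list_of_fun_def)

lemma set_list_of_fun: "set (list_of_fun n f) = f ` {1..n}"
proof -
  have "Suc ` {0..<n} = {1..n}"
    by (simp add: atLeast0LessThan image_Suc_lessThan)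
  then show ?thesis
    by (simp add: list_of_fun_def image_image flip: image_image[of f Suc])
qed

lemma list_of_fun_perm:
  assumes "invol_fun n f"
  shows "is_perm n (list_of_fun n f)" "is_involution (list_of_fun n f)"
proof -
  have "inj f"
    by (metis assms injI invol_fun_invol)
  then have "inj (f \<circ> Suc)"
    by (simp add: inj_compose)
  then have "distinct (list_of_fun n f)"
    by (simp add: list_of_fun_def distinct_map o_def inj_on_subset[of _ UNIV])
  then show "is_perm n (list_of_fun n f)"
    unfolding is_perm_def set_list_of_fun invol_fun_image[OF assms] by simp
  show "is_involution (list_of_fun n f)"
    unfolding is_involution_def
  proof (intro allI impI)
    fix i assume "i < length (list_of_fun n f)"
    then have "f (Suc i) \<in> {1..n}"
      using invol_fun_range[OF assms] by simp
    then show "list_of_fun n f ! (list_of_fun n f ! i - 1) = i + 1"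
      using \<open>i < length (list_of_fun n f)\<close> assms by auto
  qed
qed

lemma fun_of_list_invol_fun:
  assumes "is_perm n p" "is_involution p"
  shows "invol_fun n (fun_of_list n p)"
proof (rule invol_funI)
  fix x
  show "fun_of_list n p (fun_of_list n p x) = x"
  proof (cases "x \<in> {1..n}")
    case True
    then have "p ! (x - 1) \<in> {1..n}"
      using assms(1) nth_mem[of "x - 1" p] by (auto simp: is_perm_def)
    moreover have "p ! (p ! (x - 1) - 1) = x"
      using assms True unfolding is_perm_def is_involution_def by auto
    ultimately show ?thesis
      using True by (simp add: fun_of_list_def)
  qed (auto simp: fun_of_list_def)
qed (auto simp: fun_of_list_def)

lemma list_of_fun_of_list: "length p = n \<Longrightarrow> list_of_fun n (fun_of_list n p) = p"
  by (simp add: list_eq_iff_nth_eq fun_of_list_def)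

lemma inj_on_list_of_fun: "inj_on (list_of_fun n) {f. invol_fun n f}"
proof (rule inj_onI)
  fix f g assume f: "f \<in> {f. invol_fun n f}" and g: "g \<in> {f. invol_fun n f}"
    and eq: "list_of_fun n f = list_of_fun n g"
  show "f = g"
  proof
    fix x show "f x = g x"
    proof (cases "x \<in> {1..n}")
      case True
      then have "x - 1 < n" "Suc (x - 1) = x"
        by auto
      then show ?thesis
        using nth_list_of_fun[of "x - 1" n f] nth_list_of_fun[of "x - 1" n g] eq by metis
    qed (use f g in \<open>simp add: invol_fun_outside\<close>)
  qed
qed

lemma subseq_list_of_fun_iff:
  assumes "invol_fun n f" "set s \<subseteq> {1..n}"
  shows "subseq s (list_of_fun n f) \<longleftrightarrow> sorted_wrt (<) (map f s)"
proof -
  have list: "list_of_fun n f = map f [1..<Suc n]"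
    by (simp add: list_of_fun_def map_Suc_upt[of 0 n, symmetric] del: upt_Suc)
  have "subseq s (list_of_fun n f) \<longleftrightarrow> subseq (map f s) [1..<Suc n]"
  proof
    assume "subseq s (list_of_fun n f)"
    then have "subseq (map f s) (map f (map f [1..<Suc n]))"
      unfolding list by (rule subseq_map)
    then show "subseq (map f s) [1..<Suc n]"
      using assms(1) by (simp add: o_def del: upt_Suc)
  next
    assume "subseq (map f s) [1..<Suc n]"
    then have "subseq (map f (map f s)) (map f [1..<Suc n])"
      by (rule subseq_map)
    then show "subseq s (list_of_fun n f)"
      using assms(1) by (simp add: list o_def del: upt_Suc)
  qed
  also have "\<dots> \<longleftrightarrow> sorted_wrt (<) (map f s)"
  proof
    show "subseq (map f s) [1..<Suc n] \<Longrightarrow> sorted_wrt (<) (map f s)"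
      using sorted_wrt_subseq sorted_wrt_upt by blast
    assume "sorted_wrt (<) (map f s)"
    moreover have "set (map f s) \<subseteq> set [1..<Suc n]"
      using assms invol_fun_range[OF assms(1)] by (force simp del: upt_Suc)
    ultimately show "subseq (map f s) [1..<Suc n]"
      by (intro sorted_subset_imp_subseq) (simp_all add: sorted_wrt_upt del: upt_Suc)
  qed
  finally show ?thesis .
qed

definition invols_containing :: "nat \<Rightarrow> nat list \<Rightarrow> (nat \<Rightarrow> nat) set" where
  "invols_containing n s = {f. invol_fun n f \<and> sorted_wrt (<) (map f s)}"

lemma inv_count_eq_card:
  assumes "set s \<subseteq> {1..n}"
  shows "inv_count n s = card (invols_containing n s)"
proof -
  have "{p. is_perm n p \<and> is_involution p \<and> subseq s p} = list_of_fun n ` invols_containing n s"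
  proof (intro equalityI subsetI)
    fix p assume "p \<in> {p. is_perm n p \<and> is_involution p \<and> subseq s p}"
    then have p: "is_perm n p" "is_involution p" "subseq s p"
      by auto
    let ?f = "fun_of_list n p"
    have f: "invol_fun n ?f" and p_eq: "list_of_fun n ?f = p"
      using p fun_of_list_invol_fun list_of_fun_of_list by (auto simp: is_perm_def)
    then have "?f \<in> invols_containing n s"
      using subseq_list_of_fun_iff[OF f assms] p(3) by (simp add: invols_containing_def)
    then show "p \<in> list_of_fun n ` invols_containing n s"
      using p_eq by (metis image_eqI)
  next
    fix p assume "p \<in> list_of_fun n ` invols_containing n s"
    then obtain f where f: "invol_fun n f" "sorted_wrt (<) (map f s)" and p: "p = list_of_fun n f"
      by (auto simp: invols_containing_def)
    then show "p \<in> {p. is_perm n p \<and> is_involution p \<and> subseq s p}"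
      using list_of_fun_perm[OF f(1)] subseq_list_of_fun_iff[OF f(1) assms] by simp
  qed
  moreover have "inj_on (list_of_fun n) (invols_containing n s)"
    by (rule inj_on_subset[OF inj_on_list_of_fun]) (auto simp: invols_containing_def)
  ultimately show ?thesis
    unfolding inv_count_def by (simp add: card_image)
qed

lemma finite_invols_containing: "finite (invols_containing n s)"
proof (rule finite_imageD)
  show "inj_on (list_of_fun n) (invols_containing n s)"
    by (rule inj_on_subset[OF inj_on_list_of_fun]) (auto simp: invols_containing_def)
  have "set (list_of_fun n f) = {1..n}" if "f \<in> invols_containing n s" for f
    using that invol_fun_image set_list_of_fun by (simp add: invols_containing_def)
  then have "list_of_fun n ` invols_containing n s \<subseteq> {p. set p \<subseteq> {1..n} \<and> length p = n}"
    by auto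
  then show "finite (list_of_fun n ` invols_containing n s)"
    by (rule finite_subset) (intro finite_lists_length_eq, simp)
qed

section \<open>Removing the cycle through the largest point\<close>

definition close_gap :: "nat \<Rightarrow> nat \<Rightarrow> nat" where
  "close_gap a x = (if a < x then x - 1 else x)"

definition open_gap :: "nat \<Rightarrow> nat \<Rightarrow> nat" where
  "open_gap a x = (if a \<le> x then Suc x else x)"

lemma close_gap_open_gap [simp]: "close_gap a (open_gap a x) = x"
  by (simp add: close_gap_def open_gap_def)

lemma open_gap_close_gap: "x \<noteq> a \<Longrightarrow> open_gap a (close_gap a x) = x"
  by (auto simp: close_gap_def open_gap_def)

lemma open_gap_neq [simp]: "open_gap a x \<noteq> a"
  by (simp add: open_gap_def)

lemma open_gap_range: "x \<in> {1..N} \<Longrightarrow> open_gap a x \<in> {1..Suc N}"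
  by (simp add: open_gap_def)

lemma close_gap_range: "a \<in> {1..Suc N} \<Longrightarrow> x \<in> {1..Suc N} \<Longrightarrow> x \<noteq> a \<Longrightarrow> close_gap a x \<in> {1..N}"
  by (auto simp: close_gap_def)

lemma close_gap_eq_self: "x < a \<Longrightarrow> close_gap a x = x"
  by (simp add: close_gap_def)

lemma close_gap_less_iff: "x \<noteq> a \<Longrightarrow> y \<noteq> a \<Longrightarrow> close_gap a x < close_gap a y \<longleftrightarrow> x < y"
  by (auto simp: close_gap_def)

lemma close_gap_inj_iff: "x \<noteq> a \<Longrightarrow> y \<noteq> a \<Longrightarrow> close_gap a x = close_gap a y \<longleftrightarrow> x = y"
  by (auto simp: close_gap_def)

lemma close_gap_le_iff: "x \<noteq> a \<Longrightarrow> y \<noteq> a \<Longrightarrow> close_gap a x \<le> close_gap a y \<longleftrightarrow> x \<le> y"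
  by (auto simp: close_gap_def)

lemma sorted_wrt_map_close_gap:
  assumes "a \<notin> set xs"
  shows "sorted_wrt (<) (map (close_gap a) xs) \<longleftrightarrow> sorted_wrt (<) xs"
proof -
  have iff: "close_gap a x < close_gap a y \<longleftrightarrow> x < y" if "x \<in> set xs" "y \<in> set xs" for x y
  proof -
    have "x \<noteq> a" "y \<noteq> a"
      using assms that by auto
    then show ?thesis
      by (rule close_gap_less_iff)
  qed
  show ?thesis
    unfolding sorted_wrt_map
  proof
    show "sorted_wrt (\<lambda>x y. close_gap a x < close_gap a y) xs \<Longrightarrow> sorted_wrt (<) xs"
      by (erule sorted_wrt_mono_rel[rotated]) (use iff in blast)
    show "sorted_wrt (<) xs \<Longrightarrow> sorted_wrt (\<lambda>x y. close_gap a x < close_gap a y) xs"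
      by (erule sorted_wrt_mono_rel[rotated]) (use iff in blast)
  qed
qed

text \<open>Delete the 2-cycle \<open>(a, N + 2)\<close> from an involution of \<open>{1..N + 2}\<close> and close the gaps.\<close>
definition remove_cycle :: "nat \<Rightarrow> nat \<Rightarrow> (nat \<Rightarrow> nat) \<Rightarrow> nat \<Rightarrow> nat" where
  "remove_cycle N a f x = (if x \<in> {1..N} then close_gap a (f (open_gap a x)) else x)"

definition insert_cycle :: "nat \<Rightarrow> nat \<Rightarrow> (nat \<Rightarrow> nat) \<Rightarrow> nat \<Rightarrow> nat" where
  "insert_cycle N a g x =
    (if x = a then Suc (Suc N) else if x = Suc (Suc N) then a
     else if x \<in> {1..Suc N} then open_gap a (g (close_gap a x)) else x)"

context
  fixes N a :: nat and f :: "nat \<Rightarrow> nat"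
  assumes f: "invol_fun (Suc (Suc N)) f" "f (Suc (Suc N)) = a" and a: "a \<in> {1..Suc N}"
begin

lemma partner_eq_top: "f a = Suc (Suc N)"
  using invol_fun_invol[OF f(1), of "Suc (Suc N)"] f(2) by simp

lemma partner_range:
  assumes "x \<in> {1..Suc N}" "x \<noteq> a"
  shows "f x \<in> {1..Suc N}" "f x \<noteq> a"
proof -
  have "f x \<noteq> Suc (Suc N)"
    using assms f invol_fun_invol[OF f(1), of x] by force
  then show "f x \<in> {1..Suc N}"
    using invol_fun_range[OF f(1), of x] assms(1) by auto
  show "f x \<noteq> a"
    using assms partner_eq_top invol_fun_invol[OF f(1), of x] by force
qed

lemma remove_cycle_close_gap:
  assumes "x \<in> {1..Suc N}" "x \<noteq> a"
  shows "remove_cycle N a f (close_gap a x) = close_gap a (f x)"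
  using assms close_gap_range[OF a assms] by (simp add: remove_cycle_def open_gap_close_gap)

lemma invol_fun_remove_cycle: "invol_fun N (remove_cycle N a f)"
proof (rule invol_funI)
  fix x
  show "remove_cycle N a f (remove_cycle N a f x) = x"
  proof (cases "x \<in> {1..N}")
    case True
    let ?y = "f (open_gap a x)"
    have y: "?y \<in> {1..Suc N}" "?y \<noteq> a"
      using partner_range open_gap_range[OF True] by auto
    have "remove_cycle N a f (remove_cycle N a f x) = remove_cycle N a f (close_gap a ?y)"
      using True by (simp add: remove_cycle_def)
    also have "\<dots> = close_gap a (f ?y)"
      using y by (rule remove_cycle_close_gap)
    finally show ?thesis
      using f(1) by simp
  qed (auto simp: remove_cycle_def)
qed (auto simp: remove_cycle_def)

lemma insert_remove_cycle: "insert_cycle N a (remove_cycle N a f) = f"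
proof
  fix x
  consider "x = a" | "x = Suc (Suc N)" | "x \<in> {1..Suc N}" "x \<noteq> a" | "x \<notin> {1..Suc (Suc N)}"
    using a by force
  then show "insert_cycle N a (remove_cycle N a f) x = f x"
  proof cases
    case 3
    then show ?thesis
      using remove_cycle_close_gap[OF 3] partner_range[OF 3]
      by (simp add: insert_cycle_def open_gap_close_gap)
  next
    case 4
    then have "x \<noteq> a" "x \<noteq> Suc (Suc N)" "x \<notin> {1..Suc N}"
      using a by auto
    then show ?thesis
      using invol_fun_outside[OF f(1) 4] by (auto simp: insert_cycle_def)
  qed (simp_all add: insert_cycle_def partner_eq_top f(2))
qed

lemma sorted_map_remove_cycle:
  assumes "set xs \<subseteq> {1..Suc N} - {a}"
  shows "sorted_wrt (<) (map (remove_cycle N a f) (map (close_gap a) xs)) \<longleftrightarrow> sorted_wrt (<) (map f xs)"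
proof -
  have "map (remove_cycle N a f) (map (close_gap a) xs) = map (close_gap a) (map f xs)"
    using assms remove_cycle_close_gap by (force intro: map_cong)
  moreover have "f x \<noteq> a" if "x \<in> set xs" for x
    using assms that partner_range(2) by blast
  then have "sorted_wrt (<) (map (close_gap a) (map f xs)) \<longleftrightarrow> sorted_wrt (<) (map f xs)"
    by (intro sorted_wrt_map_close_gap) auto
  ultimately show ?thesis
    by (simp only:)
qed

lemma sorted_map_append_partner:
  assumes "set xs \<subseteq> {1..Suc N} - {a}"
  shows "sorted_wrt (<) (map f (xs @ [a])) \<longleftrightarrow> sorted_wrt (<) (map f xs)"
proof -
  have "f x < f a" if "x \<in> set xs" for x
    using partner_range[of x] partner_eq_top assms that by fastforce
  then show ?thesis
    by (auto simp: sorted_wrt_append)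
qed

end

context
  fixes N a :: nat and g :: "nat \<Rightarrow> nat"
  assumes g: "invol_fun N g" and a: "a \<in> {1..Suc N}"
begin

lemma insert_cycle_middle:
  assumes "x \<in> {1..Suc N}" "x \<noteq> a"
  shows "insert_cycle N a g x = open_gap a (g (close_gap a x))"
    and "insert_cycle N a g x \<in> {1..Suc N}" "insert_cycle N a g x \<noteq> a"
proof -
  show eq: "insert_cycle N a g x = open_gap a (g (close_gap a x))"
    using assms by (simp add: insert_cycle_def)
  have "g (close_gap a x) \<in> {1..N}"
    using invol_fun_range[OF g] close_gap_range[OF a assms] by blast
  then show "insert_cycle N a g x \<in> {1..Suc N}"
    unfolding eq by (rule open_gap_range)
  show "insert_cycle N a g x \<noteq> a"
    unfolding eq by simp
qed

lemma invol_fun_insert_cycle: "invol_fun (Suc (Suc N)) (insert_cycle N a g)"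
proof (rule invol_funI)
  fix x
  consider "x = a" | "x = Suc (Suc N)" | "x \<in> {1..Suc N}" "x \<noteq> a" | "x \<notin> {1..Suc (Suc N)}"
    using a by force
  then show "insert_cycle N a g (insert_cycle N a g x) = x"
  proof cases
    case 3
    let ?y = "insert_cycle N a g x"
    have "insert_cycle N a g ?y = open_gap a (g (close_gap a ?y))"
      using insert_cycle_middle(2,3)[OF 3] by (rule insert_cycle_middle(1))
    also have "\<dots> = x"
      using insert_cycle_middle(1)[OF 3] invol_fun_invol[OF g] 3 by (simp add: open_gap_close_gap)
    finally show ?thesis .
  qed (use a in \<open>auto simp: insert_cycle_def\<close>)
next
  fix x :: nat assume "x \<notin> {1..Suc (Suc N)}"
  then show "insert_cycle N a g x = x"
    using a by (auto simp: insert_cycle_def)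
qed

lemma insert_cycle_top [simp]: "insert_cycle N a g (Suc (Suc N)) = a"
  using a by (simp add: insert_cycle_def)

lemma remove_insert_cycle: "remove_cycle N a (insert_cycle N a g) = g"
proof
  fix x
  show "remove_cycle N a (insert_cycle N a g) x = g x"
  proof (cases "x \<in> {1..N}")
    case True
    then show ?thesis
      using insert_cycle_middle(1)[OF open_gap_range[OF True] open_gap_neq]
      by (simp add: remove_cycle_def)
  qed (auto simp: remove_cycle_def invol_fun_outside[OF g])
qed

end

lemma bij_betw_remove_cycle:
  assumes "a \<in> {1..Suc N}"
  shows "bij_betw (remove_cycle N a) {f. invol_fun (Suc (Suc N)) f \<and> f (Suc (Suc N)) = a} {g. invol_fun N g}"
  by (rule bij_betw_byWitness[where f' = "insert_cycle N a"])
    (use assms invol_fun_remove_cycle insert_remove_cycle invol_fun_insert_cycle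
       remove_insert_cycle insert_cycle_top in auto)

text \<open>A trailing letter \<open>a\<close> of \<open>s\<close> imposes no condition: it sits at the last position \<open>f a = N + 2\<close>.\<close>
lemma card_invols_containing_partner:
  assumes a: "a \<in> {1..Suc N}" and xs: "set xs \<subseteq> {1..Suc N} - {a}" and s: "s = xs \<or> s = xs @ [a]"
  shows "card {f \<in> invols_containing (Suc (Suc N)) s. f (Suc (Suc N)) = a} =
    card (invols_containing N (map (close_gap a) xs))"
proof -
  have "bij_betw (remove_cycle N a)
      {f \<in> {f. invol_fun (Suc (Suc N)) f \<and> f (Suc (Suc N)) = a}. sorted_wrt (<) (map f s)}
      {g \<in> {g. invol_fun N g}. sorted_wrt (<) (map g (map (close_gap a) xs))}"
  proof (rule bij_betw_Collect[OF bij_betw_remove_cycle[OF a]])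
    fix f assume "f \<in> {f. invol_fun (Suc (Suc N)) f \<and> f (Suc (Suc N)) = a}"
    then have f: "invol_fun (Suc (Suc N)) f" "f (Suc (Suc N)) = a"
      by auto
    show "sorted_wrt (<) (map f s) \<longleftrightarrow> sorted_wrt (<) (map (remove_cycle N a f) (map (close_gap a) xs))"
      using s sorted_map_append_partner[OF f a xs] sorted_map_remove_cycle[OF f a xs] by auto
  qed
  moreover have "{f \<in> invols_containing (Suc (Suc N)) s. f (Suc (Suc N)) = a} =
      {f \<in> {f. invol_fun (Suc (Suc N)) f \<and> f (Suc (Suc N)) = a}. sorted_wrt (<) (map f s)}"
    by (auto simp: invols_containing_def)
  ultimately show ?thesis
    by (simp add: bij_betw_same_card invols_containing_def)
qed

section \<open>The recursion for the number of involutions containing a permutation\<close>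

lemma set_perm: "is_perm k s \<Longrightarrow> set s = {1..k}"
  by (simp add: is_perm_def)

lemma perm_butlast:
  assumes "is_perm k s" "k \<noteq> 0"
  shows "s = butlast s @ [last s]" "last s \<in> {1..k}" "set (butlast s) = {1..k} - {last s}"
    "distinct (butlast s)"
proof -
  have "s \<noteq> []"
    using assms by (auto simp: is_perm_def)
  then show s: "s = butlast s @ [last s]"
    by simp
  have "distinct (butlast s @ [last s])" "set (butlast s @ [last s]) = {1..k}"
    using assms(1) s unfolding is_perm_def by metis+
  then show "distinct (butlast s)" "set (butlast s) = {1..k} - {last s}"
    by auto
  show "last s \<in> {1..k}"
    using \<open>s \<noteq> []\<close> set_perm[OF assms(1)] last_in_set by blast
qed

definition std_butlast :: "nat list \<Rightarrow> nat list" where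
  "std_butlast s = map (close_gap (last s)) (butlast s)"

lemma invols_containing_partner_empty:
  assumes "a \<in> set s" "a \<noteq> last s" "set s \<subseteq> {1..n}" "f \<in> invols_containing n s"
  shows "f n \<noteq> a"
proof
  assume "f n = a"
  obtain us rest where s: "s = us @ a # rest"
    using split_list[OF assms(1)] by blast
  with assms(2) obtain v ws where s: "s = us @ a # v # ws"
    by (cases rest) auto
  have f: "invol_fun n f" "sorted_wrt (<) (map f s)"
    using assms(4) by (auto simp: invols_containing_def)
  then have "f a < f v"
    using s by (simp add: sorted_wrt_append)
  moreover have "f a = n"
    using \<open>f n = a\<close> invol_fun_invol[OF f(1), of n] by simp
  moreover have "f v \<in> {1..n}"
    using invol_fun_range[OF f(1)] assms(3) s by auto
  ultimately show False
    by simp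
qed

lemma card_invols_containing_fibre:
  assumes s: "is_perm k s" and "k \<le> Suc N" and a: "a \<in> {1..Suc N}"
  shows "card {f \<in> invols_containing (Suc (Suc N)) s. f (Suc (Suc N)) = a} =
    (if k < a then card (invols_containing N s)
     else if a = last s then card (invols_containing N (std_butlast s)) else 0)"
proof -
  consider "k < a" | "a \<le> k" "a = last s" | "a \<le> k" "a \<noteq> last s"
    by linarith
  then show ?thesis
  proof cases
    case 1
    have "set s \<subseteq> {1..Suc N} - {a}"
      using set_perm[OF s] \<open>k \<le> Suc N\<close> 1 by auto
    moreover have "map (close_gap a) s = s"
    proof (rule map_idI)
      fix x assume "x \<in> set s"
      then have "x < a"
        using set_perm[OF s] 1 by auto
      then show "close_gap a x = x"
        by (rule close_gap_eq_self)
    qed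
    ultimately show ?thesis
      using card_invols_containing_partner[OF a, of s s] 1 by simp
  next
    case 2
    have "k \<noteq> 0" and last: "last s = a"
      using a 2 by auto
    have "set (butlast s) = {1..k} - {a}"
      using perm_butlast(3)[OF s \<open>k \<noteq> 0\<close>] unfolding last .
    then have sub: "set (butlast s) \<subseteq> {1..Suc N} - {a}"
      using \<open>k \<le> Suc N\<close> by (simp add: Diff_mono)
    have "s = butlast s @ [a]"
      using perm_butlast(1)[OF s \<open>k \<noteq> 0\<close>] unfolding last .
    then have "card {f \<in> invols_containing (Suc (Suc N)) s. f (Suc (Suc N)) = a} =
        card (invols_containing N (map (close_gap a) (butlast s)))"
      by (intro card_invols_containing_partner[OF a sub] disjI2)
    then show ?thesis
      using 2 by (simp add: std_butlast_def)
  next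
    case 3
    then have "a \<in> set s" "set s \<subseteq> {1..Suc (Suc N)}"
      using a set_perm[OF s] \<open>k \<le> Suc N\<close> by auto
    then have "{f \<in> invols_containing (Suc (Suc N)) s. f (Suc (Suc N)) = a} = {}"
      using invols_containing_partner_empty 3 by blast
    then show ?thesis
      using 3 by (simp only:) simp
  qed
qed

lemma invol_fun_Suc_iff: "invol_fun (Suc n) f \<and> f (Suc n) = Suc n \<longleftrightarrow> invol_fun n f"
proof
  assume f: "invol_fun (Suc n) f \<and> f (Suc n) = Suc n"
  show "invol_fun n f"
  proof (rule invol_funI)
    fix x assume "x \<notin> {1..n}"
    then have "x = Suc n \<or> x \<notin> {1..Suc n}"
      by auto
    then show "f x = x"
      using f invol_fun_outside by blast
  qed (use f invol_fun_invol in blast)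
next
  assume f: "invol_fun n f"
  have "invol_fun (Suc n) f"
  proof (rule invol_funI)
    fix x :: nat assume "x \<notin> {1..Suc n}"
    then show "f x = x"
      by (intro invol_fun_outside[OF f]) auto
  qed (use f in simp)
  then show "invol_fun (Suc n) f \<and> f (Suc n) = Suc n"
    using invol_fun_outside[OF f, of "Suc n"] by simp
qed

lemma card_invols_containing_eq_sum:
  "card (invols_containing (Suc n) s) =
    (\<Sum>a\<in>{1..Suc n}. card {f \<in> invols_containing (Suc n) s. f (Suc n) = a})"
proof -
  have "f (Suc n) \<in> {1..Suc n}" if "f \<in> invols_containing (Suc n) s" for f
    using that invol_fun_range[of "Suc n" f "Suc n"] unfolding invols_containing_def by simp
  then have "invols_containing (Suc n) s =
      (\<Union>a\<in>{1..Suc n}. {f \<in> invols_containing (Suc n) s. f (Suc n) = a})"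
    by blast
  also have "card \<dots> = (\<Sum>a\<in>{1..Suc n}. card {f \<in> invols_containing (Suc n) s. f (Suc n) = a})"
    by (rule card_UN_disjoint) (auto simp: finite_invols_containing)
  finally show ?thesis .
qed

lemma card_invols_containing_Suc:
  assumes s: "is_perm k s" and "k \<le> m"
  shows "card (invols_containing (Suc m) s) =
    card (invols_containing m s) + (m - k) * card (invols_containing (m - 1) s)
    + (if k = 0 then 0 else card (invols_containing (m - 1) (std_butlast s)))"
proof -
  let ?F = "\<lambda>a. card {f \<in> invols_containing (Suc m) s. f (Suc m) = a}"
  have "card (invols_containing (Suc m) s) = (\<Sum>a\<in>{1..m}. ?F a) + ?F (Suc m)"
    by (simp add: card_invols_containing_eq_sum)
  also have "{f \<in> invols_containing (Suc m) s. f (Suc m) = Suc m} = invols_containing m s"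
    unfolding invols_containing_def using invol_fun_Suc_iff by blast
  also have "(\<Sum>a\<in>{1..m}. ?F a) = (m - k) * card (invols_containing (m - 1) s)
      + (if k = 0 then 0 else card (invols_containing (m - 1) (std_butlast s)))"
  proof (cases m)
    case (Suc N)
    let ?X = "card (invols_containing N (std_butlast s))" and ?Y = "card (invols_containing N s)"
    have fibre: "?F a = (if k < a then ?Y else if a = last s then ?X else 0)" if "a \<in> {1..m}" for a
      using card_invols_containing_fibre[OF s _ that[unfolded Suc]] \<open>k \<le> m\<close> Suc by simp
    have split: "{1..m} = {1..k} \<union> {k<..Suc N}"
      using Suc \<open>k \<le> m\<close> by auto
    have "(\<Sum>a\<in>{1..m}. ?F a) = (\<Sum>a\<in>{1..m}. if k < a then ?Y else if a = last s then ?X else 0)"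
      using fibre by (rule sum.cong[OF refl])
    also have "\<dots> = (\<Sum>a\<in>{1..k}. if a = last s then ?X else 0) + (\<Sum>a\<in>{k<..Suc N}. ?Y)"
      unfolding split by (subst sum.union_disjoint) auto
    also have "(\<Sum>a\<in>{1..k}. if a = last s then ?X else 0) = (if k = 0 then 0 else ?X)"
      by (subst sum.delta) (use perm_butlast(2)[OF s] in auto)
    also have "(if k = 0 then 0 else ?X) + (\<Sum>a\<in>{k<..Suc N}. ?Y) =
        (m - k) * card (invols_containing (m - 1) s)
        + (if k = 0 then 0 else card (invols_containing (m - 1) (std_butlast s)))"
      using Suc by simp
    finally show ?thesis .
  qed (use \<open>k \<le> m\<close> in simp)
  finally show ?thesis
    by simp
qed

lemma is_perm_std_butlast:
  assumes s: "is_perm k s" and "k \<noteq> 0"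
  shows "is_perm (k - 1) (std_butlast s)"
proof -
  let ?a = "last s"
  note butlast = perm_butlast[OF s \<open>k \<noteq> 0\<close>]
  have a: "?a \<in> {1..Suc (k - 1)}" and set: "set (butlast s) = {1..Suc (k - 1)} - {?a}"
    using butlast(2,3) \<open>k \<noteq> 0\<close> by simp_all
  have "inj_on (close_gap ?a) (set (butlast s))"
  proof (rule inj_onI)
    fix u v assume "u \<in> set (butlast s)" "v \<in> set (butlast s)" "close_gap ?a u = close_gap ?a v"
    then show "u = v"
      using close_gap_inj_iff set by blast
  qed
  then have "distinct (std_butlast s)"
    using butlast(4) by (simp add: std_butlast_def distinct_map)
  moreover have "close_gap ?a ` set (butlast s) = {1..k - 1}"
  proof (intro equalityI subsetI)
    fix y assume "y \<in> {1..k - 1}"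
    then have "open_gap ?a y \<in> set (butlast s)"
      using open_gap_range[of y "k - 1" ?a] set by simp
    then show "y \<in> close_gap ?a ` set (butlast s)"
      by (metis close_gap_open_gap image_eqI)
  next
    fix y assume "y \<in> close_gap ?a ` set (butlast s)"
    then show "y \<in> {1..k - 1}"
      using close_gap_range[OF a] set by blast
  qed
  ultimately show ?thesis
    using s by (simp add: is_perm_def std_butlast_def)
qed

lemma pattern_map:
  assumes "\<And>u v. u \<in> set w \<Longrightarrow> v \<in> set w \<Longrightarrow> h u \<le> h v \<longleftrightarrow> u \<le> v"
  shows "pattern (map h w) = pattern w"
proof -
  have "inj_on h (set w)"
    by (rule inj_onI) (use assms in \<open>metis order_antisym order_refl\<close>)
  have "card {y \<in> h ` set w. y \<le> h x} = card {y \<in> set w. y \<le> x}" if "x \<in> set w" for x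
  proof -
    have "{y \<in> h ` set w. y \<le> h x} = h ` {y \<in> set w. y \<le> x}"
      using assms that by auto
    then show ?thesis
      using inj_on_subset[OF \<open>inj_on h (set w)\<close>] by (simp add: card_image)
  qed
  then show ?thesis
    unfolding pattern_def by simp
qed

lemma pattern_perm:
  assumes "is_perm k s"
  shows "pattern s = s"
proof -
  have "{y \<in> set s. y \<le> x} = {1..x}" if "x \<in> set s" for x
    using that set_perm[OF assms] by auto
  then show ?thesis
    unfolding pattern_def by (simp add: map_idI)
qed

lemma jset_subset: "is_perm k s \<Longrightarrow> jset s \<subseteq> {..k}"
  by (auto simp: jset_def is_perm_def)

lemma zero_in_jset: "0 \<in> jset s"
  by (simp add: jset_def)

lemma length_in_jset_iff: "is_perm k s \<Longrightarrow> k \<in> jset s \<longleftrightarrow> is_involution s"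
  by (cases "k = 0") (auto simp: jset_def is_involution_def pattern_perm is_perm_def)

lemma jset_std_butlast:
  assumes s: "is_perm k s" and "k \<noteq> 0"
  shows "jset (std_butlast s) = jset s - {k}"
proof -
  note butlast = perm_butlast[OF s \<open>k \<noteq> 0\<close>]
  have "pattern (take j (std_butlast s)) = pattern (take j s)" if "j < k" for j
  proof -
    have "take j s = take j (butlast s)"
      using that s by (simp add: take_butlast is_perm_def)
    then have "last s \<notin> set (take j s)"
      using butlast(3) by (metis Diff_iff in_set_takeD singletonI)
    then have "pattern (map (close_gap (last s)) (take j s)) = pattern (take j s)"
      by (intro pattern_map close_gap_le_iff) auto
    then show ?thesis
      using \<open>take j s = take j (butlast s)\<close> by (simp add: std_butlast_def take_map)
  qed
  moreover have "length (std_butlast s) = k - 1" "length s = k"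
    using s is_perm_std_butlast[OF s \<open>k \<noteq> 0\<close>] by (simp_all add: is_perm_def)
  ultimately show ?thesis
    using \<open>k \<noteq> 0\<close> unfolding jset_def by auto
qed

lemma inv_count_less:
  assumes "is_perm k s" "n < k"
  shows "inv_count n s = 0"
proof -
  have "{p. is_perm n p \<and> is_involution p \<and> subseq s p} = {}"
    using assms by (auto simp: is_perm_def dest: list_emb_length)
  then show ?thesis
    by (simp only: inv_count_def card.empty)
qed

lemma inv_count_self: "is_perm k s \<Longrightarrow> inv_count k s = (if is_involution s then 1 else 0)"
proof -
  assume s: "is_perm k s"
  have "p = s" if "is_perm k p" "subseq s p" for p
    using subseq_same_length[OF that(2)] that(1) s by (simp add: is_perm_def)
  then have "{p. is_perm k p \<and> is_involution p \<and> subseq s p} = (if is_involution s then {s} else {})"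
    using s by auto
  then show ?thesis
    by (simp add: inv_count_def)
qed

lemma inv_count_Suc:
  assumes s: "is_perm k s" and "k \<le> m"
  shows "inv_count (Suc m) s =
    inv_count m s + (m - k) * inv_count (m - 1) s
    + (if k = 0 then 0 else inv_count (m - 1) (std_butlast s))"
proof -
  have card: "inv_count n t = card (invols_containing n t)" if "is_perm j t" "j \<le> n" for n j t
    using that by (intro inv_count_eq_card) (simp add: set_perm)
  have "inv_count (Suc m) s = card (invols_containing (Suc m) s)"
    using card[OF s] \<open>k \<le> m\<close> by simp
  also note card_invols_containing_Suc[OF assms]
  also have "card (invols_containing m s) = inv_count m s"
    using card[OF s \<open>k \<le> m\<close>] by simp
  also have "(m - k) * card (invols_containing (m - 1) s) = (m - k) * inv_count (m - 1) s"
    by (cases "m = k") (use card[OF s] \<open>k \<le> m\<close> in auto)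
  also have "(if k = 0 then 0 else card (invols_containing (m - 1) (std_butlast s))) =
      (if k = 0 then 0 else inv_count (m - 1) (std_butlast s))"
    using card[OF is_perm_std_butlast[OF s]] \<open>k \<le> m\<close> by auto
  finally show ?thesis .
qed

section \<open>Solving the recursion\<close>

fun invol_num :: "nat \<Rightarrow> nat" where
  "invol_num 0 = 1"
| "invol_num (Suc 0) = 1"
| "invol_num (Suc (Suc m)) = invol_num (Suc m) + Suc m * invol_num m"

lemma invol_num_Suc: "invol_num (Suc m) = invol_num m + m * invol_num (m - 1)"
  by (cases m) auto

definition invol_kernel :: "nat \<Rightarrow> nat \<Rightarrow> nat" where
  "invol_kernel d m = (m choose d) * invol_num (m - d)"

definition invol_transform :: "(nat \<Rightarrow> nat) \<Rightarrow> nat \<Rightarrow> nat" where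
  "invol_transform p m = (\<Sum>d\<le>m. p d * invol_kernel d m)"

definition invol_step :: "(nat \<Rightarrow> nat) \<Rightarrow> nat \<Rightarrow> nat" where
  "invol_step p e = p e + p (Suc e) + e * p (e - 1)"

lemma invol_kernel_eq_0: "m < d \<Longrightarrow> invol_kernel d m = 0"
  by (simp add: invol_kernel_def)

lemma invol_kernel_diag [simp]: "invol_kernel d d = 1"
  by (simp add: invol_kernel_def)

lemma invol_kernel_Suc:
  "invol_kernel d (Suc m) =
     invol_kernel d m + Suc d * invol_kernel (Suc d) m + (if d = 0 then 0 else invol_kernel (d - 1) m)"
proof (cases d)
  case 0
  then show ?thesis by (simp add: invol_kernel_def invol_num_Suc)
next
  case (Suc e)
  have "(m choose Suc e) * invol_num (m - e) =
      (m choose Suc e) * invol_num (m - Suc e)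
      + Suc (Suc e) * (m choose Suc (Suc e)) * invol_num (m - Suc (Suc e))"
  proof (cases "m \<le> e")
    case False
    then obtain r where r: "m - e = Suc r" by (metis Suc_diff_Suc not_le)
    then have r': "m - Suc e = r" "m - Suc (Suc e) = r - 1" by auto
    have "(m choose Suc e) * r = Suc (Suc e) * (m choose Suc (Suc e))"
      using binomial_absorption[of "Suc e" m] binomial_absorb_comp[of m "Suc e"] r'
      by (simp add: mult.commute)
    moreover have "(m choose Suc e) * invol_num (m - e) =
        (m choose Suc e) * invol_num r + (m choose Suc e) * r * invol_num (r - 1)"
      using r by (simp add: invol_num_Suc algebra_simps)
    ultimately show ?thesis
      using r' by simp
  qed simp
  then show ?thesis
    using Suc by (simp add: invol_kernel_def algebra_simps)
qed

lemma invol_transform_Suc: "invol_transform p (Suc m) = invol_transform (invol_step p) m"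
proof -
  have shift: "(\<Sum>d\<le>Suc m. Suc d * p d * invol_kernel (Suc d) m) = (\<Sum>e\<le>m. e * p (e - 1) * invol_kernel e m)"
  proof -
    have "(\<Sum>e\<le>m. e * p (e - 1) * invol_kernel e m) = (\<Sum>e\<le>Suc m. e * p (e - 1) * invol_kernel e m)"
      by (simp add: invol_kernel_eq_0)
    also have "\<dots> = (\<Sum>d\<le>m. Suc d * p d * invol_kernel (Suc d) m)"
      by (subst sum.atMost_Suc_shift) simp
    also have "\<dots> = (\<Sum>d\<le>Suc m. Suc d * p d * invol_kernel (Suc d) m)"
      by (simp add: invol_kernel_eq_0)
    finally show ?thesis ..
  qed
  have "invol_transform p (Suc m) =
      (\<Sum>d\<le>Suc m. p d * invol_kernel d m) + (\<Sum>d\<le>Suc m. Suc d * p d * invol_kernel (Suc d) m)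
      + (\<Sum>d\<le>Suc m. p d * (if d = 0 then 0 else invol_kernel (d - 1) m))"
    unfolding invol_transform_def invol_kernel_Suc by (simp add: algebra_simps sum.distrib)
  also have "(\<Sum>d\<le>Suc m. p d * invol_kernel d m) = (\<Sum>d\<le>m. p d * invol_kernel d m)"
    by (simp add: invol_kernel_eq_0)
  also have "(\<Sum>d\<le>Suc m. p d * (if d = 0 then 0 else invol_kernel (d - 1) m)) =
      (\<Sum>e\<le>m. p (Suc e) * invol_kernel e m)"
    by (subst sum.atMost_Suc_shift) simp
  finally show ?thesis
    unfolding shift invol_transform_def invol_step_def by (simp add: algebra_simps sum.distrib)
qed

lemma invol_transform_add: "invol_transform p (m + t) = invol_transform ((invol_step ^^ t) p) m"
proof (induction t arbitrary: p)
  case (Suc t)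
  have "invol_transform p (m + Suc t) = invol_transform (invol_step p) (m + t)"
    by (simp add: invol_transform_Suc)
  also have "\<dots> = invol_transform ((invol_step ^^ t) (invol_step p)) m"
    by (rule Suc.IH)
  finally show ?case
    by (simp add: funpow_swap1)
qed simp

lemma invol_kernel_absorb: "Suc d * invol_kernel (Suc d) (Suc m) = Suc m * invol_kernel d m"
proof -
  have "Suc d * invol_kernel (Suc d) (Suc m) = (Suc d * (Suc m choose Suc d)) * invol_num (m - d)"
    by (simp only: invol_kernel_def diff_Suc_Suc mult.assoc)
  also have "\<dots> = Suc m * invol_kernel d m"
    by (simp only: Suc_times_binomial) (simp add: invol_kernel_def algebra_simps)
  finally show ?thesis .
qed

lemma invol_transform_rec:
  "invol_transform p (Suc m) =
     invol_transform p m + m * invol_transform p (m - 1) + invol_transform (\<lambda>e. p (Suc e)) m"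
proof -
  have "(\<Sum>e\<le>m. e * p (e - 1) * invol_kernel e m) = m * invol_transform p (m - 1)"
  proof (cases m)
    case (Suc n)
    have "(\<Sum>e\<le>m. e * p (e - 1) * invol_kernel e m) = (\<Sum>e\<le>Suc n. p (e - 1) * (e * invol_kernel e (Suc n)))"
      using Suc by (simp add: algebra_simps)
    also have "\<dots> = (\<Sum>d\<le>n. p d * (Suc d * invol_kernel (Suc d) (Suc n)))"
      by (subst sum.atMost_Suc_shift) simp
    also have "\<dots> = (\<Sum>d\<le>n. p d * (Suc n * invol_kernel d n))"
      by (simp only: invol_kernel_absorb)
    also have "\<dots> = m * invol_transform p (m - 1)"
      using Suc by (simp add: invol_transform_def sum_distrib_left algebra_simps)
    finally show ?thesis .
  qed simp
  then show ?thesis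
    unfolding invol_transform_Suc by (simp add: invol_transform_def invol_step_def algebra_simps sum.distrib)
qed

lemma invol_transform_eq_sum_lessThan: "invol_transform p m = (\<Sum>d<m. p d * invol_kernel d m) + p m"
  unfolding invol_transform_def by (simp add: lessThan_Suc_atMost[symmetric])

lemma le_invol_transform: "p m \<le> invol_transform p m"
  by (simp add: invol_transform_eq_sum_lessThan)

text \<open>The transform is unitriangular, since the diagonal entries of the kernel are 1.\<close>
lemma invol_transform_inject:
  assumes "\<And>m. invol_transform p m = invol_transform q m"
  shows "p = q"
proof
  fix d show "p d = q d"
  proof (induction d rule: less_induct)
    case (less d)
    then have "(\<Sum>e<d. p e * invol_kernel e d) = (\<Sum>e<d. q e * invol_kernel e d)"
      by simp
    with assms[of d] show ?case
      by (simp add: invol_transform_eq_sum_lessThan)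
  qed
qed

lemma invol_step_funpow_eq_0:
  assumes "\<And>e. k < e \<Longrightarrow> p e = 0"
  shows "k + t < d \<Longrightarrow> (invol_step ^^ t) p d = 0"
proof (induction t arbitrary: d)
  case 0
  then show ?case using assms by simp
next
  case (Suc t)
  then show ?case by (simp add: invol_step_def)
qed

lemma invol_step_funpow_top:
  assumes "\<And>e. k < e \<Longrightarrow> p e = 0"
  shows "fact k * (invol_step ^^ t) p (k + t) = fact (k + t) * p k"
proof (induction t)
  case (Suc t)
  have "(invol_step ^^ t) p d = 0" if "k + t < d" for d
    using assms that by (rule invol_step_funpow_eq_0)
  then have "(invol_step ^^ Suc t) p (k + Suc t) = Suc (k + t) * (invol_step ^^ t) p (k + t)"
    by (simp add: invol_step_def)
  then show ?case
    using Suc.IH by (simp add: algebra_simps)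
qed simp

definition jset_coeff :: "nat \<Rightarrow> nat set \<Rightarrow> nat \<Rightarrow> nat" where
  "jset_coeff k J d = (if d \<le> k \<and> k - d \<in> J then 1 else 0)"

text \<open>Substituting \<open>d = k - j\<close>, this is \<open>\<Sum>j\<in>J. (n - k choose k - j) * invol_num (n - 2 * k + j)\<close>.\<close>
definition inv_formula :: "nat \<Rightarrow> nat \<Rightarrow> nat set \<Rightarrow> nat" where
  "inv_formula n k J = (if n < k then 0 else invol_transform (jset_coeff k J) (n - k))"

lemma jset_coeff_inject:
  assumes "J \<subseteq> {..k}" "J' \<subseteq> {..k}" and "jset_coeff k J = jset_coeff k J'"
  shows "J = J'"
proof -
  have "j \<in> J \<longleftrightarrow> j \<in> J'" if "j \<le> k" for j
    using fun_cong[OF assms(3), of "k - j"] that by (simp add: jset_coeff_def split: if_splits)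
  then show ?thesis
    using assms(1,2) by blast
qed

lemma inv_formula_diag: "inv_formula k k J = (if k \<in> J then 1 else 0)"
  by (simp add: inv_formula_def invol_transform_def jset_coeff_def)

lemma inv_formula_Suc:
  assumes "k \<le> m"
  shows "inv_formula (Suc m) k J =
    inv_formula m k J + (m - k) * inv_formula (m - 1) k J
    + (if k = 0 then 0 else inv_formula (m - 1) (k - 1) (J - {k}))"
proof -
  let ?q = "jset_coeff k J"
  have "inv_formula (Suc m) k J = invol_transform ?q (Suc (m - k))"
    using assms by (simp add: inv_formula_def Suc_diff_le)
  also have "\<dots> = invol_transform ?q (m - k) + (m - k) * invol_transform ?q (m - k - 1)
      + invol_transform (\<lambda>e. ?q (Suc e)) (m - k)"
    by (rule invol_transform_rec)
  also have "invol_transform ?q (m - k) = inv_formula m k J"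
    using assms by (simp add: inv_formula_def)
  also have "(m - k) * invol_transform ?q (m - k - 1) = (m - k) * inv_formula (m - 1) k J"
    by (cases "m = k") (use assms in \<open>auto simp add: inv_formula_def\<close>)
  also have "invol_transform (\<lambda>e. ?q (Suc e)) (m - k) =
      (if k = 0 then 0 else inv_formula (m - 1) (k - 1) (J - {k}))"
  proof (cases "k = 0")
    case False
    then have "(\<lambda>e. ?q (Suc e)) = jset_coeff (k - 1) (J - {k})"
      by (auto simp: jset_coeff_def fun_eq_iff Suc_diff_Suc)
    moreover have "\<not> m - 1 < k - 1" "m - 1 - (k - 1) = m - k"
      using assms False by auto
    ultimately show ?thesis
      using False by (simp only: inv_formula_def if_False)
  qed (simp add: jset_coeff_def invol_transform_def)
  finally show ?thesis .
qed

lemma inv_formula_inject_le: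
  assumes J: "J \<subseteq> {..k}" "0 \<in> J" and J': "J' \<subseteq> {..k'}" "0 \<in> J'" and "k \<le> k'"
    and eq: "\<And>n. inv_formula n k J = inv_formula n k' J'"
  shows "k = k' \<and> J = J'"
proof -
  define t where "t = k' - k"
  define p where "p = jset_coeff k J"
  have k': "k' = k + t"
    using \<open>k \<le> k'\<close> by (simp add: t_def)
  have "invol_transform (jset_coeff k' J') m = invol_transform ((invol_step ^^ t) p) m" for m
    using eq[of "m + k'"] by (simp add: inv_formula_def p_def k' invol_transform_add add.assoc)
  then have q: "jset_coeff k' J' = (invol_step ^^ t) p"
    by (rule invol_transform_inject)
  have "t = 0"
  proof (rule ccontr)
    assume "t \<noteq> 0"
    have "p m = 0" if "m < t" for m
      using le_invol_transform[of p m] eq[of "m + k"] that by (simp add: inv_formula_def p_def k')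
    moreover have "p k = 1"
      using J by (simp add: p_def jset_coeff_def)
    ultimately have "t \<le> k"
      by (metis not_le zero_neq_one)
    have "fact k * (invol_step ^^ t) p (k + t) = fact (k + t) * p k"
      by (rule invol_step_funpow_top) (simp add: p_def jset_coeff_def)
    moreover have "(invol_step ^^ t) p (k + t) = 1"
      using fun_cong[OF q, of k'] J' k' by (simp add: jset_coeff_def)
    ultimately have "fact k = (fact (k + t) :: nat)"
      using \<open>p k = 1\<close> by simp
    moreover have "fact k < (fact (k + t) :: nat)"
      using \<open>t \<noteq> 0\<close> \<open>t \<le> k\<close> by (intro fact_less_mono_nat) auto
    ultimately show False by simp
  qed
  then have "k' = k" and "jset_coeff k J = jset_coeff k J'"
    using q k' by (simp_all add: p_def)
  then show ?thesis
    using J(1) J'(1) jset_coeff_inject by metis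
qed

lemma inv_formula_inject:
  assumes "J \<subseteq> {..k}" "0 \<in> J" "J' \<subseteq> {..k'}" "0 \<in> J'"
    and "\<And>n. inv_formula n k J = inv_formula n k' J'"
  shows "k = k' \<and> J = J'"
proof (cases "k \<le> k'")
  case True
  then show ?thesis using assms inv_formula_inject_le by blast
next
  case False
  then show ?thesis using assms inv_formula_inject_le[of J' k' J k] by force
qed

lemma inv_count_eq_inv_formula: "is_perm k s \<Longrightarrow> inv_count n s = inv_formula n k (jset s)"
proof (induction n arbitrary: k s rule: less_induct)
  case (less n)
  have "n < k \<or> n = k \<or> (\<exists>m. n = Suc m \<and> k \<le> m)"
    by presburger
  then consider "n < k" | "n = k" | m where "n = Suc m" "k \<le> m"
    by blast
  then show ?case
  proof cases
    case 1
    then show ?thesis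
      using inv_count_less[OF less.prems] by (simp add: inv_formula_def)
  next
    case 2
    then show ?thesis
      using inv_count_self[OF less.prems] length_in_jset_iff[OF less.prems] by (simp add: inv_formula_diag)
  next
    case 3
    let ?J = "jset s"
    have IH: "inv_count m s = inv_formula m k ?J" "inv_count (m - 1) s = inv_formula (m - 1) k ?J"
      using less.IH less.prems 3 by simp_all
    have IH': "(if k = 0 then 0 else inv_count (m - 1) (std_butlast s)) =
        (if k = 0 then 0 else inv_formula (m - 1) (k - 1) (?J - {k}))"
    proof (cases "k = 0")
      case False
      then show ?thesis
        using less.IH[OF _ is_perm_std_butlast[OF less.prems False], of "m - 1"] 3
        by (simp add: jset_std_butlast[OF less.prems False])
    qed simp
    have "inv_count n s = inv_count m s + (m - k) * inv_count (m - 1) s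
        + (if k = 0 then 0 else inv_count (m - 1) (std_butlast s))"
      using inv_count_Suc[OF less.prems \<open>k \<le> m\<close>] 3 by simp
    also have "\<dots> = inv_formula n k ?J"
      unfolding IH IH' \<open>n = Suc m\<close> by (rule inv_formula_Suc[OF \<open>k \<le> m\<close>, symmetric])
    finally show ?thesis .
  qed
qed

theorem mainTheorem8:
  fixes \<sigma> \<tau> :: "nat list" and k k' :: nat
  assumes "is_perm k \<sigma>" and "is_perm k' \<tau>"
  shows "(\<forall>n. inv_count n \<sigma> = inv_count n \<tau>) \<longleftrightarrow> (k = k' \<and> jset \<sigma> = jset \<tau>)"
proof
  assume "\<forall>n. inv_count n \<sigma> = inv_count n \<tau>"
  then have "\<And>n. inv_formula n k (jset \<sigma>) = inv_formula n k' (jset \<tau>)"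
    using inv_count_eq_inv_formula assms by metis
  then show "k = k' \<and> jset \<sigma> = jset \<tau>"
    using inv_formula_inject jset_subset zero_in_jset assms by metis
next
  assume "k = k' \<and> jset \<sigma> = jset \<tau>"
  then show "\<forall>n. inv_count n \<sigma> = inv_count n \<tau>"
    using inv_count_eq_inv_formula assms by simp
qed

end
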